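(* For the additive noise model with $N$ items and $K$ defectives and the random Bernoulli$(1/K)$ design, in the regime $N,K\to\infty$ with $K=o(N)$, a necessary condition on the number of tests is $$T=\Omega\!\left(\frac{K\log\frac{N}{K}}{2(1-q)+\ln\frac{1}{q}}\right),$$ where $q$ is the parameter of the Bernoulli noise; namely, if $T=o\!\left(\frac{K\log\frac{N}{K}}{2(1-q)+\ln\frac1q}\right)$ then the error probability approaches $1$.
   Context: Design: $N\times T$ binary matrix with i.i.d. Bernoulli$(1/K)$ entries, $X_j(t)=1$ iff item $j$ is in test $t$. Additive noise model: for defective set $S$ ($|S|=K$, uniformly distributed among $K$-subsets), $Y(t)=\left(\bigvee_{j\in S}X_j(t)\right)\vee W(t)$ with $W(t)$ i.i.d. Bernoulli$(q)$, $q\in(0,1)$, independent of the design. The error probability is that of any decoder estimating $S$ from the outcomes $Y^T$ and the design. *)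

theory Defs
  imports "HOL-Analysis.Analysis" "HOL-Library.Landau_Symbols"
begin

text \<open>A test design is a boolean matrix X j t (item j in test t), with support in
  items j < N and tests t < T.\<close>

type_synonym design = "nat \<Rightarrow> nat \<Rightarrow> bool"
type_synonym outcome = "nat \<Rightarrow> bool"

definition designs :: "nat \<Rightarrow> nat \<Rightarrow> design set" where
  "designs N T = {X. \<forall>j t. X j t \<longrightarrow> j < N \<and> t < T}"

definition noises :: "nat \<Rightarrow> outcome set" where
  "noises T = {W. \<forall>t. W t \<longrightarrow> t < T}"

definition defective_sets :: "nat \<Rightarrow> nat \<Rightarrow> nat set set" where
  "defective_sets N K = {S. S \<subseteq> {..<N} \<and> card S = K}"

definition design_prob :: "nat \<Rightarrow> nat \<Rightarrow> nat \<Rightarrow> design \<Rightarrow> real" where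
  "design_prob N K T X =
     (\<Prod>j<N. \<Prod>t<T. if X j t then 1 / real K else 1 - 1 / real K)"

definition noise_prob :: "nat \<Rightarrow> real \<Rightarrow> outcome \<Rightarrow> real" where
  "noise_prob T q W = (\<Prod>t<T. if W t then q else 1 - q)"

definition outcomes :: "nat \<Rightarrow> nat set \<Rightarrow> design \<Rightarrow> outcome \<Rightarrow> outcome" where
  "outcomes T S X W = (\<lambda>t. t < T \<and> ((\<exists>j\<in>S. X j t) \<or> W t))"

definition success_prob ::
  "nat \<Rightarrow> nat \<Rightarrow> nat \<Rightarrow> real \<Rightarrow> (design \<Rightarrow> outcome \<Rightarrow> nat set) \<Rightarrow> real" where
  "success_prob N K T q dec =
     (\<Sum>S\<in>defective_sets N K. \<Sum>X\<in>designs N T. \<Sum>W\<in>noises T.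
        (1 / real (N choose K)) * design_prob N K T X * noise_prob T q W *
        (if dec X (outcomes T S X W) = S then 1 else 0))"

definition error_prob ::
  "nat \<Rightarrow> nat \<Rightarrow> nat \<Rightarrow> real \<Rightarrow> (design \<Rightarrow> outcome \<Rightarrow> nat set) \<Rightarrow> real" where
  "error_prob N K T q dec = 1 - success_prob N K T q dec"

end

theory Submission
  imports Defs "HOL-Real_Asymp.Real_Asymp"
begin

text \<open>For a fixed design X and noise W, a decoder can only be right on those defective sets S
  with S = dec X (Y S), and these are determined by their outcome vectors, of which there are
  at most 2^T.  Averaging over X and W, the success probability is at most
  2^T / (N choose K) \<le> exp (T ln 2 - K ln (N/K)).  Since 2(1 - q) + ln (1/q) is a positive
  constant, the hypothesis on T gives T ln 2 \<le> K ln (N/K) / 2 eventually, so the success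
  probability is at most exp (-K/2), which tends to 0.\<close>

definition supported_bool_funs :: "'a set \<Rightarrow> ('a \<Rightarrow> bool) set" where
  "supported_bool_funs I = {g. \<forall>i. g i \<longrightarrow> i \<in> I}"

lemma supported_bool_funs_eq_image_Pow:
  "supported_bool_funs I = (\<lambda>A i. i \<in> A) ` Pow I"
proof (rule set_eqI, rule iffI)
  fix g :: "'a \<Rightarrow> bool" assume "g \<in> supported_bool_funs I"
  then have "{i. g i} \<in> Pow I" "g = (\<lambda>i. i \<in> {i. g i})"
    by (auto simp: supported_bool_funs_def)
  then show "g \<in> (\<lambda>A i. i \<in> A) ` Pow I" by blast
qed (auto simp: supported_bool_funs_def)

lemma inj_on_mem_Pow: "inj_on (\<lambda>A i. i \<in> A) (Pow I)"
  by (rule inj_onI) (simp add: fun_eq_iff set_eq_iff)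

lemma finite_supported_bool_funs: "finite I \<Longrightarrow> finite (supported_bool_funs I)"
  unfolding supported_bool_funs_eq_image_Pow by simp

lemma card_supported_bool_funs:
  "finite I \<Longrightarrow> card (supported_bool_funs I) = 2 ^ card I"
  unfolding supported_bool_funs_eq_image_Pow
  by (simp add: card_image[OF inj_on_mem_Pow] card_Pow)

lemma sum_prod_supported_bool_funs:
  fixes h :: "'a \<Rightarrow> bool \<Rightarrow> 'b :: comm_semiring_1"
  assumes "finite I"
  shows "(\<Sum>g\<in>supported_bool_funs I. \<Prod>i\<in>I. h i (g i)) = (\<Prod>i\<in>I. h i True + h i False)"
proof -
  have "(\<Sum>g\<in>supported_bool_funs I. \<Prod>i\<in>I. h i (g i))
      = (\<Sum>A\<in>Pow I. \<Prod>i\<in>I. if i \<in> A then h i True else h i False)"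
    unfolding supported_bool_funs_eq_image_Pow
    by (simp add: sum.reindex[OF inj_on_mem_Pow]) (intro sum.cong prod.cong; simp)
  also have "\<dots> = (\<Sum>A\<in>Pow I. (\<Prod>i\<in>A. h i True) * (\<Prod>i\<in>I - A. h i False))"
    using assms by (intro sum.cong refl) (auto simp: prod.If_cases Int_absorb1 Diff_eq)
  also have "\<dots> = (\<Prod>i\<in>I. h i True + h i False)"
    using assms by (rule prod_add[symmetric])
  finally show ?thesis .
qed

lemma noises_eq: "noises T = supported_bool_funs {..<T}"
  by (simp add: noises_def supported_bool_funs_def)

lemma designs_eq: "designs N T = curry ` supported_bool_funs ({..<N} \<times> {..<T})"
proof (rule set_eqI, rule iffI)
  fix X assume "X \<in> designs N T"
  then have "case_prod X \<in> supported_bool_funs ({..<N} \<times> {..<T})" "X = curry (case_prod X)"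
    by (auto simp: designs_def supported_bool_funs_def)
  then show "X \<in> curry ` supported_bool_funs ({..<N} \<times> {..<T})" by blast
qed (auto simp: designs_def supported_bool_funs_def)

lemma sum_noise_prob: "(\<Sum>W\<in>noises T. noise_prob T q W) = 1"
  unfolding noises_eq noise_prob_def
  using sum_prod_supported_bool_funs[of "{..<T}" "\<lambda>_ b. if b then q else 1 - q"] by simp

lemma sum_design_prob: "(\<Sum>X\<in>designs N T. design_prob N K T X) = 1"
proof -
  let ?I = "{..<N} \<times> {..<T}"
  have "inj curry" by (metis case_prod_curry injI)
  then have "(\<Sum>X\<in>designs N T. design_prob N K T X)
      = (\<Sum>g\<in>supported_bool_funs ?I. design_prob N K T (curry g))"
    unfolding designs_eq by (subst sum.reindex) (auto intro: inj_on_subset)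
  also have "\<dots> = (\<Sum>g\<in>supported_bool_funs ?I.
      \<Prod>p\<in>?I. if g p then 1 / real K else 1 - 1 / real K)"
    by (simp add: design_prob_def prod.cartesian_product case_prod_beta)
  also have "\<dots> = 1"
    using sum_prod_supported_bool_funs[of ?I "\<lambda>_ b. if b then 1 / real K else 1 - 1 / real K"]
    by simp
  finally show ?thesis .
qed

lemma design_prob_nonneg: "1 \<le> K \<Longrightarrow> 0 \<le> design_prob N K T X"
  unfolding design_prob_def by (intro prod_nonneg) (simp add: field_simps)

lemma noise_prob_nonneg: "0 \<le> q \<Longrightarrow> q \<le> 1 \<Longrightarrow> 0 \<le> noise_prob T q W"
  unfolding noise_prob_def by (intro prod_nonneg) simp

lemma finite_defective_sets: "finite (defective_sets N K)"
  unfolding defective_sets_def by (rule finite_subset[of _ "Pow {..<N}"]) auto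

lemma card_correctly_decoded_le:
  "card {S \<in> A. dec X (outcomes T S X W) = S} \<le> 2 ^ T"
proof -
  have "inj_on (\<lambda>S. outcomes T S X W) {S \<in> A. dec X (outcomes T S X W) = S}"
    by (rule inj_onI) (metis (mono_tags, lifting) mem_Collect_eq)
  moreover have "(\<lambda>S. outcomes T S X W) ` {S \<in> A. dec X (outcomes T S X W) = S} \<subseteq> noises T"
    by (auto simp: noises_def outcomes_def)
  ultimately have "card {S \<in> A. dec X (outcomes T S X W) = S} \<le> card (noises T)"
    by (rule card_inj_on_le) (simp add: noises_eq finite_supported_bool_funs)
  also have "\<dots> = 2 ^ T"
    by (simp add: noises_eq card_supported_bool_funs)
  finally show ?thesis .
qed

lemma success_prob_nonneg:
  "1 \<le> K \<Longrightarrow> 0 \<le> q \<Longrightarrow> q \<le> 1 \<Longrightarrow> 0 \<le> success_prob N K T q dec"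
  unfolding success_prob_def
  by (intro sum_nonneg mult_nonneg_nonneg design_prob_nonneg noise_prob_nonneg) auto

lemma success_prob_le:
  assumes "1 \<le> K" "0 \<le> q" "q \<le> 1"
  shows "success_prob N K T q dec \<le> 2 ^ T / real (N choose K)"
proof -
  let ?D = "defective_sets N K"
  let ?c = "1 / real (N choose K)"
  let ?P = "\<lambda>X W. ?c * design_prob N K T X * noise_prob T q W"
  let ?ok = "\<lambda>X W S. if dec X (outcomes T S X W) = S then 1 else 0 :: real"
  have "success_prob N K T q dec
      = (\<Sum>S\<in>?D. \<Sum>X\<in>designs N T. \<Sum>W\<in>noises T. ?P X W * ?ok X W S)"
    unfolding success_prob_def by simp
  also have "\<dots> = (\<Sum>X\<in>designs N T. \<Sum>W\<in>noises T. ?P X W * (\<Sum>S\<in>?D. ?ok X W S))"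
    unfolding sum_distrib_left by (subst sum.swap) (simp add: sum.swap[of _ ?D])
  also have "\<dots> \<le> (\<Sum>X\<in>designs N T. \<Sum>W\<in>noises T. ?P X W * 2 ^ T)"
  proof (intro sum_mono mult_left_mono)
    fix X W
    have "(\<Sum>S\<in>?D. ?ok X W S) = real (card {S \<in> ?D. dec X (outcomes T S X W) = S})"
      by (simp add: sum.If_cases finite_defective_sets Int_def conj_commute)
    also have "\<dots> \<le> real (2 ^ T)"
      using card_correctly_decoded_le by (rule of_nat_mono)
    finally show "(\<Sum>S\<in>?D. ?ok X W S) \<le> 2 ^ T" by simp
    show "0 \<le> ?P X W"
      using assms by (simp add: design_prob_nonneg noise_prob_nonneg)
  qed
  also have "\<dots> = ?c * 2 ^ T
      * (\<Sum>X\<in>designs N T. design_prob N K T X) * (\<Sum>W\<in>noises T. noise_prob T q W)"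
    by (simp add: sum_product sum_distrib_left sum_divide_distrib mult_ac)
  also have "\<dots> = 2 ^ T / real (N choose K)"
    by (simp add: sum_design_prob sum_noise_prob)
  finally show ?thesis .
qed

lemma pow2_div_binomial_le_exp:
  fixes N K T :: nat
  assumes "1 \<le> K" "3 * K \<le> N"
    and T: "real T * ln 2 \<le> real K * ln (real N / real K) / 2"
  shows "2 ^ T / real (N choose K) \<le> exp (- real K / 2)"
proof -
  define L where "L = real K * ln (real N / real K)"
  have ratio: "3 \<le> real N / real K"
    using assms(1,2) by (simp add: field_simps)
  have "exp 1 \<le> real N / real K"
    using exp_le ratio by linarith
  then have "1 \<le> ln (real N / real K)"
    using ratio by (subst ln_ge_iff) auto
  then have "real K \<le> L"
    unfolding L_def using mult_left_mono[of 1 _ "real K"] by simp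
  have "exp L = (real N / real K) ^ K"
    unfolding L_def using ratio by (simp add: exp_of_nat_mult)
  also have "\<dots> \<le> real (N choose K)"
    using assms(2) by (intro binomial_ge_n_over_k_pow_k) simp
  finally have binom: "exp L \<le> real (N choose K)" .
  have "2 ^ T / real (N choose K) \<le> exp (real T * ln 2) / exp L"
    using binom by (intro frac_le) (simp_all add: exp_of_nat_mult)
  also have "\<dots> = exp (real T * ln 2 - L)"
    by (simp add: exp_diff)
  also have "\<dots> \<le> exp (- real K / 2)"
    using T \<open>real K \<le> L\<close> unfolding L_def by simp
  finally show ?thesis .
qed

lemma error_prob_le_one: "1 \<le> K \<Longrightarrow> 0 \<le> q \<Longrightarrow> q \<le> 1 \<Longrightarrow> error_prob N K T q dec \<le> 1"
  unfolding error_prob_def using success_prob_nonneg by simp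

lemma error_prob_ge_one_minus_exp:
  assumes "1 \<le> K" "3 * K \<le> N" "0 \<le> q" "q \<le> 1"
    and "real T * ln 2 \<le> real K * ln (real N / real K) / 2"
  shows "1 - exp (- real K / 2) \<le> error_prob N K T q dec"
  using success_prob_le[OF assms(1,3,4), of N T dec] pow2_div_binomial_le_exp[OF assms(1,2,5)]
  unfolding error_prob_def by linarith

lemma eventually_few_tests:
  fixes N K T :: "nat \<Rightarrow> nat" and c :: real
  assumes "c > 0"
    and N: "filterlim N at_top sequentially"
    and K: "filterlim K at_top sequentially"
    and ratio: "(\<lambda>n. real (K n) / real (N n)) \<longlonglongrightarrow> 0"
    and T: "(\<lambda>n. real (T n)) \<in> o(\<lambda>n. real (K n) * ln (real (N n) / real (K n)) / c)"
  shows "eventually (\<lambda>n. 1 \<le> K n \<and> 3 * K n \<le> N n \<and>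
           real (T n) * ln 2 \<le> real (K n) * ln (real (N n) / real (K n)) / 2) sequentially"
proof -
  have "eventually (\<lambda>n. 1 \<le> K n) sequentially" "eventually (\<lambda>n. 1 \<le> N n) sequentially"
    using K N by (simp_all add: filterlim_at_top)
  moreover have "eventually (\<lambda>n. real (K n) / real (N n) < 1 / 3) sequentially"
    using ratio by (rule order_tendstoD) simp
  moreover have "eventually (\<lambda>n. norm (real (T n))
      \<le> c / (2 * ln 2) * norm (real (K n) * ln (real (N n) / real (K n)) / c)) sequentially"
    using landau_o.smallD[OF T, of "c / (2 * ln 2)"] \<open>c > 0\<close> by simp
  ultimately show ?thesis
  proof eventually_elim
    case (elim n)
    then have "3 * K n \<le> N n"
      by (simp add: field_simps)
    moreover have "0 \<le> ln (real (N n) / real (K n))"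
      using \<open>3 * K n \<le> N n\<close> \<open>1 \<le> K n\<close> by (simp add: field_simps)
    ultimately show ?case
      using elim \<open>c > 0\<close> by (simp add: field_simps)
  qed
qed

theorem theorem8:
  fixes N K T :: "nat \<Rightarrow> nat" and q :: real
    and dec :: "nat \<Rightarrow> design \<Rightarrow> outcome \<Rightarrow> nat set"
  assumes "0 < q" "q < 1"
    and "filterlim N at_top sequentially"
    and "filterlim K at_top sequentially"
    and "(\<lambda>n. real (K n) / real (N n)) \<longlonglongrightarrow> 0"
    and "(\<lambda>n. real (T n)) \<in>
           o(\<lambda>n. real (K n) * ln (real (N n) / real (K n)) / (2 * (1 - q) + ln (1 / q)))"
  shows "(\<lambda>n. error_prob (N n) (K n) (T n) q (dec n)) \<longlonglongrightarrow> 1"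
proof -
  have "0 < ln (1 / q)"
    using assms(1,2) by simp
  then have "0 < 2 * (1 - q) + ln (1 / q)"
    using assms(2) by argo
  note few = eventually_few_tests[OF this assms(3-6)]
  have lower: "eventually (\<lambda>n. 1 - exp (- real (K n) / 2) \<le> error_prob (N n) (K n) (T n) q (dec n))
      sequentially"
    using few by (rule eventually_mono) (rule error_prob_ge_one_minus_exp, use assms(1,2) in auto)
  have upper: "eventually (\<lambda>n. error_prob (N n) (K n) (T n) q (dec n) \<le> 1) sequentially"
    using few by (rule eventually_mono) (rule error_prob_le_one, use assms(1,2) in auto)
  have "((\<lambda>x::real. 1 - exp (- x / 2)) \<longlongrightarrow> 1) at_top"
    by real_asymp
  moreover have "filterlim (\<lambda>n. real (K n)) at_top sequentially"
    using filterlim_compose[OF filterlim_real_sequentially assms(4)] .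
  ultimately have "(\<lambda>n. 1 - exp (- real (K n) / 2)) \<longlonglongrightarrow> 1"
    by (rule filterlim_compose)
  with lower upper show ?thesis
    by (rule tendsto_sandwich[OF _ _ _ tendsto_const])
qed

end
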